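(* Let $\alpha\in(0,2]$, $T>0$ and $\mathcal{S}=[-T,T]\times\mathbb{R}^N$. Then $d$ is a quasi-distance on $\mathcal{S}$: $d((t,\mathbf{x}),(s,\mathbf{y}))=0$ if and only if $(t,\mathbf{x})=(s,\mathbf{y})$, $d$ is symmetric, and there exists $C>0$ depending only on $\alpha$, $A$ and the dimensions such that for all $(t,\mathbf{x}),(\sigma,\boldsymbol{\xi}),(s,\mathbf{y})\in\mathcal{S}$, $$d((t,\mathbf{x}),(s,\mathbf{y}))\le C\big(d((t,\mathbf{x}),(\sigma,\boldsymbol{\xi}))+d((\sigma,\boldsymbol{\xi}),(s,\mathbf{y}))\big).$$ Moreover, $(\mathcal{S},d,\mu)$, with $\mu$ the Lebesgue measure, is a homogeneous space.
   Context: $n\ge1$, $d_1\ge\dots\ge d_n>0$, $N=\sum_id_i$, $\mathbf{x}=(\mathbf{x}_1,\dots,\mathbf{x}_n)$ with $\mathbf{x}_i\in\mathbb{R}^{d_i}$. $A\in\mathbb{R}^{N\times N}$ is a block matrix whose only nonzero blocks are $A_{i,i-1}\in\mathbb{R}^{d_i\times d_{i-1}}$, $i=2,\dots,n$, each of rank $d_i$. $\rho(t,\mathbf{x})=|t|^{1/\alpha}+\sum_{i=1}^n|\mathbf{x}_i|^{\frac{1}{1+\alpha(i-1)}}$ and $d((t,\mathbf{x}),(s,\mathbf{y}))=\frac12\big(\rho(t-s,e^{(s-t)A}\mathbf{x}-\mathbf{y})+\rho(t-s,\mathbf{x}-e^{(t-s)A}\mathbf{y})\big)$. A homogeneous space is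 a triple $(X,d,\mu)$ where $d$ is a quasi-distance on $X$ (positive off the diagonal, symmetric, quasi-triangle inequality with some constant), the balls $B(x,r)=\{y:d(y,x)<r\}$ are open in the topology they generate, and $\mu$ is a Borel measure with the doubling property: there is $A'>0$ with $0<\mu(B(x,2r))\le A'\mu(B(x,r))<\infty$ for all $x\in X$, $r>0$. *)

theory Defs
  imports "HOL-Analysis.Analysis"
begin

text \<open>Coordinates of R^N are given by the finite type 'N; blk assigns each coordinate
  its block index in 1..n.\<close>

primrec mpow :: "real^'N^'N \<Rightarrow> nat \<Rightarrow> real^'N^'N" where
  "mpow M 0 = mat 1"
| "mpow M (Suc k) = M ** mpow M k"

definition mexp :: "real^'N^'N \<Rightarrow> real^'N^'N" where
  "mexp M = (\<Sum>k. (1 / fact k) *\<^sub>R mpow M k)"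

definition blockpart :: "('N \<Rightarrow> nat) \<Rightarrow> nat \<Rightarrow> real^'N \<Rightarrow> real^'N" where
  "blockpart blk i x = (\<chi> k. if blk k = i then x $ k else 0)"

definition subblock :: "('N \<Rightarrow> nat) \<Rightarrow> real^'N^'N \<Rightarrow> nat \<Rightarrow> nat \<Rightarrow> real^'N^'N" where
  "subblock blk A i j = (\<chi> k l. if blk k = i \<and> blk l = j then A $ k $ l else 0)"

definition block_setting ::
  "nat \<Rightarrow> (nat \<Rightarrow> nat) \<Rightarrow> ('N::finite \<Rightarrow> nat) \<Rightarrow> real^'N^'N \<Rightarrow> bool" where
  "block_setting n dd blk A \<longleftrightarrow>
     n \<ge> 1
   \<and> (\<forall>i j. 1 \<le> i \<and> i \<le> j \<and> j \<le> n \<longrightarrow> dd j \<le> dd i)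
   \<and> (\<forall>i\<in>{1..n}. dd i > 0)
   \<and> (\<forall>k. blk k \<in> {1..n})
   \<and> (\<forall>i\<in>{1..n}. card {k. blk k = i} = dd i)
   \<and> (\<forall>k l. blk k \<noteq> blk l + 1 \<longrightarrow> A $ k $ l = 0)
   \<and> (\<forall>i\<in>{2..n}. rank (subblock blk A i (i - 1)) = dd i)"

definition rho :: "real \<Rightarrow> nat \<Rightarrow> ('N \<Rightarrow> nat) \<Rightarrow> real \<Rightarrow> real^'N \<Rightarrow> real" where
  "rho \<alpha> n blk t x = \<bar>t\<bar> powr (1 / \<alpha>)
     + (\<Sum>i=1..n. norm (blockpart blk i x) powr (1 / (1 + \<alpha> * (real i - 1))))"

definition qdist :: "real \<Rightarrow> nat \<Rightarrow> ('N \<Rightarrow> nat) \<Rightarrow> real^'N^'N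
    \<Rightarrow> real \<times> (real^'N) \<Rightarrow> real \<times> (real^'N) \<Rightarrow> real" where
  "qdist \<alpha> n blk A p q = (case p of (t, x) \<Rightarrow> case q of (s, y) \<Rightarrow>
     (rho \<alpha> n blk (t - s) (mexp ((s - t) *\<^sub>R A) *v x - y)
      + rho \<alpha> n blk (t - s) (x - mexp ((t - s) *\<^sub>R A) *v y)) / 2)"

definition strip :: "real \<Rightarrow> (real \<times> (real^'N)) set" where
  "strip T = {-T..T} \<times> UNIV"

definition dball :: "'a set \<Rightarrow> ('a \<Rightarrow> 'a \<Rightarrow> real) \<Rightarrow> 'a \<Rightarrow> real \<Rightarrow> 'a set" where
  "dball X d x r = {y\<in>X. d y x < r}"

definition quasi_distance :: "'a set \<Rightarrow> ('a \<Rightarrow> 'a \<Rightarrow> real) \<Rightarrow> bool" where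
  "quasi_distance X d \<longleftrightarrow>
     (\<forall>x\<in>X. \<forall>y\<in>X. d x y \<ge> 0 \<and> (d x y = 0 \<longleftrightarrow> x = y))
   \<and> (\<forall>x\<in>X. \<forall>y\<in>X. d x y = d y x)
   \<and> (\<exists>C>0. \<forall>x\<in>X. \<forall>y\<in>X. \<forall>z\<in>X. d x z \<le> C * (d x y + d y z))"

definition d_open :: "'a set \<Rightarrow> ('a \<Rightarrow> 'a \<Rightarrow> real) \<Rightarrow> 'a set \<Rightarrow> bool" where
  "d_open X d U \<longleftrightarrow> U \<subseteq> X \<and> (\<forall>x\<in>U. \<exists>r>0. dball X d x r \<subseteq> U)"

definition homogeneous_space :: "'a set \<Rightarrow> ('a \<Rightarrow> 'a \<Rightarrow> real) \<Rightarrow> 'a measure \<Rightarrow> bool" where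
  "homogeneous_space X d \<mu> \<longleftrightarrow>
     quasi_distance X d
   \<and> (\<forall>x\<in>X. \<forall>r>0. d_open X d (dball X d x r))
   \<and> space \<mu> = X
   \<and> sets \<mu> = sigma_sets X {U. d_open X d U}
   \<and> (\<exists>A'>0. \<forall>x\<in>X. \<forall>r>0.
        0 < emeasure \<mu> (dball X d x (2 * r))
      \<and> emeasure \<mu> (dball X d x (2 * r)) \<le> ennreal A' * emeasure \<mu> (dball X d x r)
      \<and> emeasure \<mu> (dball X d x r) < \<infinity>)"

end

theory Submission
  imports Defs
begin

text \<open>
  Since A lowers the block index by one, it is nilpotent, so exp(tau A) is a polynomial in
  tau whose i-th block is a combination of the terms tau^k x_(i-k). The elementary inequality
  (a^k y)^(1/(p + alpha k)) <= a^(1/alpha) + y^(1/p) then gives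
  hnorm(exp(tau A) x) <= K (|tau|^(1/alpha) + hnorm x) for the spatial part hnorm of rho,
  which is subadditive because all its exponents are at most 1. Splitting
  exp((s - t) A) x - y through an intermediate point with the group law
  exp(a A) exp(b A) = exp((a + b) A) yields the quasi-triangle inequality.
  The distance is continuous and small distance forces Euclidean closeness, so its balls
  generate the Euclidean topology. By Fubini, the measure of a ball of radius r is comparable
  to the volume of the sublevel set {hnorm < r} times the length of a time interval of radius
  r^alpha clipped to [-T, T]; the anisotropic dilations scale hnorm linearly, which gives the
  doubling property.
\<close>

lemma powr_add_le_add_powr:
  fixes x y e :: real
  assumes "0 \<le> x" "0 \<le> y" "0 < e" "e \<le> 1"
  shows "(x + y) powr e \<le> x powr e + y powr e"
proof (cases "x = 0 \<or> y = 0")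
  case True
  then show ?thesis using assms by auto
next
  case False
  then have x: "x > 0" and y: "y > 0" using assms by auto
  have "(x + y) powr e = (x + y) powr (e - 1) * x + (x + y) powr (e - 1) * y"
    using powr_add[of "x + y" "e - 1" 1] x y by (simp add: distrib_left)
  also have "\<dots> \<le> x powr (e - 1) * x + y powr (e - 1) * y"
    using x y assms by (intro add_mono mult_right_mono powr_mono2') auto
  also have "\<dots> = x powr e + y powr e"
    using powr_add[of x "e - 1" 1] powr_add[of y "e - 1" 1] x y by simp
  finally show ?thesis .
qed

lemma powr_sum_le_sum_powr:
  fixes f :: "'a \<Rightarrow> real"
  assumes "\<And>i. i \<in> I \<Longrightarrow> 0 \<le> f i" "0 < e" "e \<le> 1"
  shows "(\<Sum>i\<in>I. f i) powr e \<le> (\<Sum>i\<in>I. f i powr e)"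
  using assms(1)
proof (induction I rule: infinite_finite_induct)
  case (insert x F)
  have "(\<Sum>i\<in>insert x F. f i) powr e = (f x + (\<Sum>i\<in>F. f i)) powr e"
    using insert by simp
  also have "\<dots> \<le> f x powr e + (\<Sum>i\<in>F. f i) powr e"
    using insert assms by (intro powr_add_le_add_powr) (auto intro: sum_nonneg)
  also have "\<dots> \<le> f x powr e + (\<Sum>i\<in>F. f i powr e)"
    using insert by auto
  finally show ?case using insert by simp
qed auto

lemma abs_add_powr_le:
  fixes a b p :: real
  assumes "0 < p"
  shows "\<bar>a + b\<bar> powr p \<le> 2 powr p * (\<bar>a\<bar> powr p + \<bar>b\<bar> powr p)"
proof -
  have "\<bar>a + b\<bar> powr p \<le> (2 * max \<bar>a\<bar> \<bar>b\<bar>) powr p"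
    using assms by (intro powr_mono2) auto
  also have "\<dots> = 2 powr p * max \<bar>a\<bar> \<bar>b\<bar> powr p"
    by (simp add: powr_mult)
  also have "max \<bar>a\<bar> \<bar>b\<bar> powr p \<le> \<bar>a\<bar> powr p + \<bar>b\<bar> powr p"
    by (auto simp: max_def)
  finally show ?thesis by (simp add: mult_left_mono)
qed

text \<open>Both factors are bounded by powers of m = max (a powr (1/al)) (y powr (1/p)),
  so the product is at most m powr (p + al k).\<close>
lemma monomial_powr_le:
  fixes a y al p :: real and k :: nat
  assumes "0 \<le> a" "0 \<le> y" "0 < al" "1 \<le> p"
  shows "(a ^ k * y) powr (1 / (p + al * k)) \<le> a powr (1 / al) + y powr (1 / p)"
proof (cases "a ^ k * y = 0 \<or> k = 0")
  case True
  then show ?thesis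
  proof
    assume "a ^ k * y = 0"
    then have "(a ^ k * y) powr (1 / (p + al * k)) = 0 powr (1 / (p + al * k))" by (rule arg_cong)
    then have zero: "(a ^ k * y) powr (1 / (p + al * k)) = 0" by simp
    show ?thesis by (subst zero) (simp add: add_nonneg_nonneg)
  qed simp
next
  case False
  then have a: "a > 0" and y: "y > 0" using assms by auto
  define m where "m = max (a powr (1 / al)) (y powr (1 / p))"
  have m: "m > 0" using a unfolding m_def by (simp add: less_max_iff_disj)
  have "a = (a powr (1 / al)) powr al" using a assms by (simp add: powr_powr)
  also have "\<dots> \<le> m powr al" using assms unfolding m_def by (intro powr_mono2) auto
  finally have "a ^ k \<le> (m powr al) ^ k" using assms by (intro power_mono) auto
  also have "\<dots> = m powr (al * k)" using m by (simp add: powr_realpow[symmetric] powr_powr)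
  finally have ak: "a ^ k \<le> m powr (al * k)" .
  have "y = (y powr (1 / p)) powr p" using y assms by (simp add: powr_powr)
  also have "\<dots> \<le> m powr p" using assms unfolding m_def by (intro powr_mono2) auto
  finally have "a ^ k * y \<le> m powr (al * k) * m powr p"
    using ak y by (intro mult_mono) auto
  also have "\<dots> = m powr (p + al * k)" by (simp add: powr_add ac_simps)
  finally have "(a ^ k * y) powr (1 / (p + al * k)) \<le> (m powr (p + al * k)) powr (1 / (p + al * k))"
    using assms by (intro powr_mono2) auto
  also have "\<dots> = m"
  proof -
    have "p + al * k > 0" using assms by (simp add: add_pos_nonneg)
    then show ?thesis using m by (simp add: powr_powr)
  qed
  also have "m \<le> a powr (1 / al) + y powr (1 / p)" unfolding m_def by auto
  finally show ?thesis .
qed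

lemma le_powr_if_powr_le_one:
  fixes z e :: real
  assumes "0 \<le> z" "0 < e" "e \<le> 1" "z powr e \<le> 1"
  shows "z \<le> z powr e"
proof (cases "z = 0")
  case False
  have "z \<le> 1"
  proof (rule ccontr)
    assume "\<not> z \<le> 1"
    then have "1 < z powr e" using assms by (intro gr_one_powr) auto
    then show False using assms by linarith
  qed
  then have "z powr 1 \<le> z powr e" using assms by (intro powr_mono') auto
  then show ?thesis using False assms by simp
qed simp

lemma abs_less_powr_if_powr_inverse_less:
  fixes \<tau> \<rho> al :: real
  assumes "0 < al" "\<bar>\<tau>\<bar> powr (1 / al) < \<rho>"
  shows "\<bar>\<tau>\<bar> < \<rho> powr al"
proof -
  have "\<bar>\<tau>\<bar> = (\<bar>\<tau>\<bar> powr (1 / al)) powr al"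
    using assms by (cases "\<tau> = 0") (simp_all add: powr_powr)
  also have "\<dots> < \<rho> powr al" using assms by (intro powr_less_mono2) auto
  finally show ?thesis .
qed

lemma powr_inverse_le_if_abs_le_powr:
  fixes \<tau> \<rho> al :: real
  assumes "0 < al" "0 \<le> \<rho>" "\<bar>\<tau>\<bar> \<le> \<rho> powr al"
  shows "\<bar>\<tau>\<bar> powr (1 / al) \<le> \<rho>"
proof -
  have "\<bar>\<tau>\<bar> powr (1 / al) \<le> (\<rho> powr al) powr (1 / al)" using assms by (intro powr_mono2) auto
  also have "\<dots> = \<rho>" using assms by (cases "\<rho> = 0") (simp_all add: powr_powr)
  finally show ?thesis .
qed

lemma sum_binomial_fact:
  fixes a b :: real
  shows "(\<Sum>i\<le>m. a ^ i / fact i * (b ^ (m - i) / fact (m - i))) = (a + b) ^ m / fact m"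
proof -
  have "(a + b) ^ m / fact m = (\<Sum>i\<le>m. of_nat (m choose i) * a ^ i * b ^ (m - i) / fact m)"
    by (simp add: binomial_ring sum_divide_distrib)
  also have "\<dots> = (\<Sum>i\<le>m. a ^ i / fact i * (b ^ (m - i) / fact (m - i)))"
    by (rule sum.cong) (auto simp: binomial_fact)
  finally show ?thesis by simp
qed

definition clipped_length :: "real \<Rightarrow> real \<Rightarrow> real \<Rightarrow> real" where
  "clipped_length T s R = min T (s + R) - max (-T) (s - R)"

lemma emeasure_clipped_interval:
  "s \<in> {-T..T} \<Longrightarrow> 0 \<le> R \<Longrightarrow>
    emeasure lborel ({-T..T} \<inter> {s - R..s + R}) = ennreal (clipped_length T s R)"
  unfolding clipped_length_def by simp

lemma clipped_length_eq:
  "s \<in> {-T..T} \<Longrightarrow> 0 \<le> R \<Longrightarrow> clipped_length T s R = min (T - s) R + min (s + T) R"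
  unfolding clipped_length_def by (auto simp: min_def max_def)

lemma clipped_length_nonneg: "s \<in> {-T..T} \<Longrightarrow> 0 \<le> R \<Longrightarrow> 0 \<le> clipped_length T s R"
  by (simp add: clipped_length_eq)

lemma clipped_length_pos: "s \<in> {-T..T} \<Longrightarrow> 0 < R \<Longrightarrow> 0 < T \<Longrightarrow> 0 < clipped_length T s R"
  by (simp add: clipped_length_eq min_def)

lemma clipped_length_scale:
  assumes s: "s \<in> {-T..T}" and R: "0 \<le> R" and k: "1 \<le> k"
  shows "clipped_length T s (k * R) \<le> k * clipped_length T s R"
proof -
  have min_le: "min a (k * R) \<le> k * min a R" if "0 \<le> a" for a
    using that R k mult_right_mono[of 1 k a] mult_right_mono[of 1 k R] by (auto simp: min_def)
  have "clipped_length T s (k * R) = min (T - s) (k * R) + min (s + T) (k * R)"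
    using s R k by (intro clipped_length_eq) auto
  also have "\<dots> \<le> k * min (T - s) R + k * min (s + T) R"
    using s by (intro add_mono min_le) auto
  also have "\<dots> = k * clipped_length T s R" using s R by (simp add: clipped_length_eq distrib_left)
  finally show ?thesis .
qed

lemma mpow_scaleR: "mpow (c *\<^sub>R M) k = c ^ k *\<^sub>R mpow M k"
  by (induction k) (simp_all add: scalar_matrix_assoc[symmetric] matrix_scalar_ac)

lemma mpow_add: "mpow M (j + k) = mpow M j ** mpow M k"
  by (induction j) (simp_all add: matrix_mul_assoc)

lemma matrix_vector_mult_sum_left:
  "(\<Sum>k\<in>K. (f k :: real^'n^'m)) *v x = (\<Sum>k\<in>K. f k *v x)"
  by (induction K rule: infinite_finite_induct) (simp_all add: matrix_vector_mult_add_rdistrib)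

lemma blockpart_linear: "linear (blockpart blk i)"
  by (rule linearI) (simp_all add: blockpart_def vec_eq_iff)

locale block_quasi_distance =
  fixes al :: real and n :: nat and dd :: "nat \<Rightarrow> nat" and blk :: "'N::finite \<Rightarrow> nat"
    and A :: "real^'N^'N"
  assumes block_setting: "block_setting n dd blk A" and al_pos: "0 < al"
begin

lemma n_ge_1: "n \<ge> 1"
  using block_setting by (simp add: block_setting_def)

lemma blk_ge_1: "1 \<le> blk k"
  using block_setting by (auto simp: block_setting_def)

lemma blk_le_n: "blk k \<le> n"
  using block_setting by (auto simp: block_setting_def)

lemma blk_eq_if_A_nonzero: "A $ k $ l \<noteq> 0 \<Longrightarrow> blk k = blk l + 1"
  using block_setting by (auto simp: block_setting_def)

lemma blk_eq_if_mpow_nonzero: "mpow A m $ a $ b \<noteq> 0 \<Longrightarrow> blk a = blk b + m"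
proof (induction m arbitrary: a b)
  case 0
  then show ?case by (auto simp: mat_def split: if_splits)
next
  case (Suc m)
  then have "(\<Sum>c\<in>UNIV. A $ a $ c * mpow A m $ c $ b) \<noteq> 0"
    by (simp add: matrix_matrix_mult_def)
  then obtain c where "A $ a $ c * mpow A m $ c $ b \<noteq> 0"
    by (meson sum.neutral)
  then have "A $ a $ c \<noteq> 0" "mpow A m $ c $ b \<noteq> 0" by auto
  then show ?case using Suc.IH blk_eq_if_A_nonzero by force
qed

lemma mpow_eq_0: "n \<le> m \<Longrightarrow> mpow A m = 0"
proof -
  assume "n \<le> m"
  have "mpow A m $ a $ b = 0" for a b
    using blk_eq_if_mpow_nonzero[of m a b] blk_ge_1[of b] blk_le_n[of a] \<open>n \<le> m\<close> by linarith
  then show ?thesis by (simp add: vec_eq_iff)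
qed

definition expA :: "real \<Rightarrow> real^'N^'N" where
  "expA \<tau> = (\<Sum>k<n. (\<tau> ^ k / fact k) *\<^sub>R mpow A k)"

lemma mexp_scaleR_A: "mexp (\<tau> *\<^sub>R A) = expA \<tau>"
proof -
  have "mexp (\<tau> *\<^sub>R A) = (\<Sum>k. (1 / fact k) *\<^sub>R (\<tau> ^ k *\<^sub>R mpow A k))"
    unfolding mexp_def mpow_scaleR ..
  also have "\<dots> = (\<Sum>k<n. (1 / fact k) *\<^sub>R (\<tau> ^ k *\<^sub>R mpow A k))"
    by (rule suminf_finite) (auto simp: mpow_eq_0)
  finally show ?thesis unfolding expA_def by simp
qed

lemma expA_mult_vector: "expA \<tau> *v x = (\<Sum>k<n. (\<tau> ^ k / fact k) *\<^sub>R (mpow A k *v x))"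
  by (simp add: expA_def matrix_vector_mult_sum_left scaleR_matrix_vector_assoc)

lemma expA_0_mult: "expA 0 *v x = x"
proof -
  obtain m where m: "n = Suc m" using n_ge_1 by (cases n) auto
  show ?thesis unfolding expA_mult_vector unfolding m sum.lessThan_Suc_shift by simp
qed

lemma expA_add_mult: "expA a *v (expA b *v x) = expA (a + b) *v x"
proof -
  define g where "g m = mpow A m *v x" for m
  define F where "F j k = (a ^ j / fact j * (b ^ k / fact k)) *\<^sub>R g (j + k)" for j k
  have g_eq_0: "n \<le> m \<Longrightarrow> g m = 0" for m by (simp add: g_def mpow_eq_0)
  have "expA a *v (expA b *v x) = (\<Sum>j<n. \<Sum>k<n. F j k)"
    unfolding expA_mult_vector[of a] expA_mult_vector[of b] F_def g_def
    by (simp add: linear_sum matrix_vector_mult_scaleR scaleR_sum_right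
        matrix_vector_mul_assoc mpow_add)
  also have "\<dots> = (\<Sum>(j, k)\<in>{..<n} \<times> {..<n}. F j k)"
    by (simp add: sum.cartesian_product)
  also have "\<dots> = (\<Sum>(j, k)\<in>{(j, k). j + k < n}. F j k)"
    by (rule sum.mono_neutral_right) (auto simp: F_def, metis g_eq_0 not_le)
  also have "\<dots> = (\<Sum>m<n. \<Sum>i\<le>m. F i (m - i))"
    by (rule sum.triangle_reindex)
  also have "\<dots> = (\<Sum>m<n. ((a + b) ^ m / fact m) *\<^sub>R g m)"
  proof (rule sum.cong)
    fix m
    have "(\<Sum>i\<le>m. F i (m - i)) = (\<Sum>i\<le>m. a ^ i / fact i * (b ^ (m - i) / fact (m - i))) *\<^sub>R g m"
      unfolding F_def scaleR_sum_left by (rule sum.cong) auto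
    then show "(\<Sum>i\<le>m. F i (m - i)) = ((a + b) ^ m / fact m) *\<^sub>R g m"
      by (simp only: sum_binomial_fact)
  qed simp
  also have "\<dots> = expA (a + b) *v x" unfolding expA_mult_vector g_def ..
  finally show ?thesis .
qed

abbreviation bp :: "nat \<Rightarrow> real^'N \<Rightarrow> real^'N" where
  "bp i \<equiv> blockpart blk i"

lemma blockpart_0: "bp 0 v = 0"
proof -
  have "bp 0 v $ a = 0" for a using blk_ge_1[of a] by (simp add: blockpart_def)
  then show ?thesis by (simp add: vec_eq_iff)
qed

lemma blockpart_mpow: "bp i (mpow A k *v v) = mpow A k *v bp (i - k) v"
proof -
  have entry: "(if blk a = i then mpow A k $ a $ b * v $ b else 0)
      = mpow A k $ a $ b * (if blk b = i - k then v $ b else 0)" for a b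
  proof (cases "mpow A k $ a $ b = 0")
    case False
    then have "blk a = blk b + k" by (rule blk_eq_if_mpow_nonzero)
    then have "blk a = i \<longleftrightarrow> blk b = i - k" using blk_ge_1[of b] by auto
    then show ?thesis by simp
  qed simp
  have "bp i (mpow A k *v v) $ a = (mpow A k *v bp (i - k) v) $ a" for a
  proof -
    have "bp i (mpow A k *v v) $ a = (\<Sum>b\<in>UNIV. if blk a = i then mpow A k $ a $ b * v $ b else 0)"
      by (simp add: blockpart_def matrix_vector_mult_def)
    also have "\<dots> = (\<Sum>b\<in>UNIV. mpow A k $ a $ b * (if blk b = i - k then v $ b else 0))"
      by (intro sum.cong refl entry)
    also have "\<dots> = (mpow A k *v bp (i - k) v) $ a"
      by (simp add: blockpart_def matrix_vector_mult_def)
    finally show ?thesis .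
  qed
  then show ?thesis by (simp add: vec_eq_iff)
qed

lemma sum_blockpart: "(\<Sum>i=1..n. bp i v) = v"
proof -
  have "(\<Sum>i=1..n. bp i v) $ a = v $ a" for a
    using blk_ge_1[of a] blk_le_n[of a] by (simp add: blockpart_def)
  then show ?thesis by (simp add: vec_eq_iff)
qed

lemma norm_le_sum_blockpart: "norm v \<le> (\<Sum>i=1..n. norm (bp i v))"
  using norm_sum[of "\<lambda>i. bp i v" "{1..n}"] unfolding sum_blockpart .

definition hom_exp :: "nat \<Rightarrow> real" where
  "hom_exp i = 1 / (1 + al * (real i - 1))"

lemma hom_exp_pos: "1 \<le> i \<Longrightarrow> 0 < hom_exp i"
  unfolding hom_exp_def using al_pos by (simp add: add_pos_nonneg)

lemma hom_exp_le_1: "1 \<le> i \<Longrightarrow> hom_exp i \<le> 1"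
  unfolding hom_exp_def using al_pos by (simp add: divide_le_eq_1 add_pos_nonneg)

definition hnorm :: "real^'N \<Rightarrow> real" where
  "hnorm v = (\<Sum>i=1..n. norm (bp i v) powr hom_exp i)"

lemma rho_eq_hnorm: "rho al n blk t x = \<bar>t\<bar> powr (1 / al) + hnorm x"
  by (simp add: rho_def hnorm_def hom_exp_def)

lemma hnorm_nonneg: "0 \<le> hnorm v"
  unfolding hnorm_def by (simp add: sum_nonneg)

lemma hnorm_0: "hnorm 0 = 0"
  unfolding hnorm_def by (simp add: linear_0[OF blockpart_linear])

lemma hnorm_uminus: "hnorm (- v) = hnorm v"
  unfolding hnorm_def by (simp add: linear_neg[OF blockpart_linear])

lemma hnorm_minus_commute: "hnorm (x - y) = hnorm (y - x)"
  using hnorm_uminus[of "y - x"] by simp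

lemma hnorm_add_le: "hnorm (x + y) \<le> hnorm x + hnorm y"
proof -
  have "norm (bp i (x + y)) powr hom_exp i \<le> norm (bp i x) powr hom_exp i + norm (bp i y) powr hom_exp i"
    if "i \<in> {1..n}" for i
  proof -
    have "norm (bp i (x + y)) powr hom_exp i \<le> (norm (bp i x) + norm (bp i y)) powr hom_exp i"
      using that hom_exp_pos[of i]
      by (intro powr_mono2) (auto simp: linear_add[OF blockpart_linear] norm_triangle_ineq)
    also have "\<dots> \<le> norm (bp i x) powr hom_exp i + norm (bp i y) powr hom_exp i"
      using that hom_exp_pos[of i] hom_exp_le_1[of i] by (intro powr_add_le_add_powr) auto
    finally show ?thesis .
  qed
  then show ?thesis unfolding hnorm_def sum.distrib[symmetric] by (intro sum_mono) auto
qed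

lemma blockpart_powr_le_hnorm: "i \<in> {1..n} \<Longrightarrow> norm (bp i v) powr hom_exp i \<le> hnorm v"
  unfolding hnorm_def by (rule member_le_sum) auto

lemma hnorm_eq_0_iff: "hnorm v = 0 \<longleftrightarrow> v = 0"
proof
  assume "hnorm v = 0"
  then have "norm (bp i v) powr hom_exp i = 0" if "i \<in> {1..n}" for i
    using blockpart_powr_le_hnorm[OF that, of v] by (simp add: order_antisym)
  then have "(\<Sum>i=1..n. bp i v) = 0" by (intro sum.neutral) auto
  then show "v = 0" by (simp only: sum_blockpart)
qed (simp add: hnorm_0)

lemma norm_le_hnorm:
  assumes "hnorm w \<le> 1"
  shows "norm w \<le> hnorm w"
proof -
  have "norm (bp i w) \<le> norm (bp i w) powr hom_exp i" if "i \<in> {1..n}" for i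
    using that hom_exp_pos hom_exp_le_1 blockpart_powr_le_hnorm[OF that, of w] assms
    by (intro le_powr_if_powr_le_one) auto
  then have "(\<Sum>i=1..n. norm (bp i w)) \<le> hnorm w" unfolding hnorm_def by (intro sum_mono) auto
  then show ?thesis using norm_le_sum_blockpart[of w] by linarith
qed

lemma mpow_bound: "\<exists>B\<ge>1. \<forall>k<n. \<forall>w. norm (mpow A k *v w) \<le> B * norm w"
proof -
  define B where "B = 1 + (\<Sum>k<n. onorm ((*v) (mpow A k)))"
  have onorm_nonneg: "0 \<le> onorm ((*v) (mpow A k))" for k
    by (rule onorm_pos_le) simp
  have "norm (mpow A k *v w) \<le> B * norm w" if "k < n" for k w
  proof -
    have "onorm ((*v) (mpow A k)) \<le> (\<Sum>k<n. onorm ((*v) (mpow A k)))"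
      using that onorm_nonneg by (intro member_le_sum) auto
    then have "onorm ((*v) (mpow A k)) \<le> B" unfolding B_def by simp
    then have "onorm ((*v) (mpow A k)) * norm w \<le> B * norm w"
      by (intro mult_right_mono) auto
    moreover have "norm (mpow A k *v w) \<le> onorm ((*v) (mpow A k)) * norm w"
      by (rule onorm) simp
    ultimately show ?thesis by linarith
  qed
  moreover have "B \<ge> 1" unfolding B_def using onorm_nonneg by (simp add: sum_nonneg)
  ultimately show ?thesis by blast
qed

text \<open>The exponent of block i is the exponent of block i - k shifted by al k; this is where
  the weights of the gauge match the block structure of A.\<close>
lemma powr_monomial_le_hnorm:
  assumes i: "i \<in> {1..n}"
  shows "(\<bar>\<tau>\<bar> ^ k * norm (bp (i - k) v)) powr hom_exp i \<le> \<bar>\<tau>\<bar> powr (1 / al) + hnorm v"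
proof (cases "k < i")
  case False
  then show ?thesis by (simp add: blockpart_0 hnorm_nonneg)
next
  case True
  define j where "j = i - k"
  have j: "1 \<le> j" "j \<in> {1..n}" using True i unfolding j_def by auto
  have "hom_exp i = 1 / ((1 + al * (real j - 1)) + al * k)"
    unfolding hom_exp_def j_def using True by (simp add: of_nat_diff algebra_simps)
  then have "(\<bar>\<tau>\<bar> ^ k * norm (bp j v)) powr hom_exp i
      \<le> \<bar>\<tau>\<bar> powr (1 / al) + norm (bp j v) powr hom_exp j"
    unfolding hom_exp_def[of j] using al_pos j by (simp only:) (intro monomial_powr_le; simp)
  also have "\<dots> \<le> \<bar>\<tau>\<bar> powr (1 / al) + hnorm v"
    using blockpart_powr_le_hnorm[OF j(2)] by simp
  finally show ?thesis unfolding j_def .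
qed

lemma norm_blockpart_expA_le:
  assumes B: "\<And>k w. k < n \<Longrightarrow> norm (mpow A k *v w) \<le> B * norm w"
  shows "norm (bp i (expA \<tau> *v v)) \<le> (\<Sum>k<n. B * (\<bar>\<tau>\<bar> ^ k * norm (bp (i - k) v)))"
proof -
  have expansion: "bp i (expA \<tau> *v v) = (\<Sum>k<n. (\<tau> ^ k / fact k) *\<^sub>R (mpow A k *v bp (i - k) v))"
    by (simp add: expA_mult_vector linear_sum[OF blockpart_linear]
        linear_scale[OF blockpart_linear] blockpart_mpow)
  have "norm (bp i (expA \<tau> *v v)) \<le> (\<Sum>k<n. norm ((\<tau> ^ k / fact k) *\<^sub>R (mpow A k *v bp (i - k) v)))"
    unfolding expansion by (rule norm_sum)
  also have "\<dots> = (\<Sum>k<n. \<bar>\<tau> ^ k / fact k\<bar> * norm (mpow A k *v bp (i - k) v))"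
    by simp
  also have "\<dots> \<le> (\<Sum>k<n. \<bar>\<tau>\<bar> ^ k * (B * norm (bp (i - k) v)))"
  proof (rule sum_mono)
    fix k assume "k \<in> {..<n}"
    moreover have "\<bar>\<tau> ^ k / fact k\<bar> \<le> \<bar>\<tau>\<bar> ^ k"
      by (simp add: abs_divide power_abs divide_le_eq fact_ge_1 mult_le_cancel_left1)
    ultimately show "\<bar>\<tau> ^ k / fact k\<bar> * norm (mpow A k *v bp (i - k) v) \<le> \<bar>\<tau>\<bar> ^ k * (B * norm (bp (i - k) v))"
      using B by (intro mult_mono) auto
  qed
  finally show ?thesis by (simp add: ac_simps)
qed

lemma hnorm_expA_le: "\<exists>K\<ge>0. \<forall>\<tau> v. hnorm (expA \<tau> *v v) \<le> K * (\<bar>\<tau>\<bar> powr (1 / al) + hnorm v)"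
proof -
  obtain B where B1: "B \<ge> 1" and B: "\<And>k w. k < n \<Longrightarrow> norm (mpow A k *v w) \<le> B * norm w"
    using mpow_bound by blast
  have "hnorm (expA \<tau> *v v) \<le> (real n * real n * B) * (\<bar>\<tau>\<bar> powr (1 / al) + hnorm v)" for \<tau> v
  proof -
    define R where "R = \<bar>\<tau>\<bar> powr (1 / al) + hnorm v"
    have "norm (bp i (expA \<tau> *v v)) powr hom_exp i \<le> real n * B * R" if i: "i \<in> {1..n}" for i
    proof -
      have e: "0 < hom_exp i" "hom_exp i \<le> 1" using i hom_exp_pos hom_exp_le_1 by auto
      have "norm (bp i (expA \<tau> *v v)) powr hom_exp i
          \<le> (\<Sum>k<n. B * (\<bar>\<tau>\<bar> ^ k * norm (bp (i - k) v))) powr hom_exp i"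
        using e norm_blockpart_expA_le[OF B] by (intro powr_mono2) auto
      also have "\<dots> \<le> (\<Sum>k<n. B powr hom_exp i * (\<bar>\<tau>\<bar> ^ k * norm (bp (i - k) v)) powr hom_exp i)"
        using e B1 powr_sum_le_sum_powr[of "{..<n}" "\<lambda>k. B * (\<bar>\<tau>\<bar> ^ k * norm (bp (i - k) v))"]
        by (simp add: powr_mult)
      also have "\<dots> \<le> (\<Sum>k<n. B * R)"
      proof (rule sum_mono)
        fix k
        have "B powr hom_exp i \<le> B" using B1 e powr_mono[of "hom_exp i" 1 B] by simp
        then show "B powr hom_exp i * (\<bar>\<tau>\<bar> ^ k * norm (bp (i - k) v)) powr hom_exp i \<le> B * R"
          using powr_monomial_le_hnorm[OF i, of \<tau> k v] B1 unfolding R_def by (intro mult_mono) auto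
      qed
      finally show ?thesis by simp
    qed
    then have "hnorm (expA \<tau> *v v) \<le> (\<Sum>i=1..n. real n * B * R)"
      unfolding hnorm_def by (intro sum_mono) auto
    then show ?thesis unfolding R_def by simp
  qed
  moreover have "real n * real n * B \<ge> 0" using B1 by simp
  ultimately show ?thesis by blast
qed

abbreviation d :: "real \<times> (real^'N) \<Rightarrow> real \<times> (real^'N) \<Rightarrow> real" where
  "d \<equiv> qdist al n blk A"

lemma qdist_eq: "d (t, x) (s, y) =
   \<bar>t - s\<bar> powr (1 / al) + (hnorm (expA (s - t) *v x - y) + hnorm (expA (t - s) *v y - x)) / 2"
  unfolding qdist_def
  by (simp only: mexp_scaleR_A prod.case rho_eq_hnorm hnorm_minus_commute[of x]) (simp add: field_simps)

lemma qdist_nonneg: "0 \<le> d p q"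
  by (cases p; cases q) (simp add: qdist_eq hnorm_nonneg)

lemma qdist_self: "d p p = 0"
  by (cases p) (simp add: qdist_eq expA_0_mult hnorm_0)

lemma qdist_eq_0_iff: "d p q = 0 \<longleftrightarrow> p = q"
proof
  assume "d p q = 0"
  obtain t x s y where pq: "p = (t, x)" "q = (s, y)" by (cases p; cases q) auto
  have "\<bar>t - s\<bar> powr (1 / al) + hnorm (expA (s - t) *v x - y) / 2 + hnorm (expA (t - s) *v y - x) / 2 = 0"
    using \<open>d p q = 0\<close> unfolding pq qdist_eq by (simp add: add_divide_distrib add.assoc)
  then have "\<bar>t - s\<bar> powr (1 / al) = 0" "hnorm (expA (t - s) *v y - x) = 0"
    using hnorm_nonneg[of "expA (s - t) *v x - y"] hnorm_nonneg[of "expA (t - s) *v y - x"]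
      powr_ge_zero[of "\<bar>t - s\<bar>" "1 / al"] by linarith+
  then show "p = q" unfolding pq by (simp add: hnorm_eq_0_iff expA_0_mult)
qed (simp add: qdist_self)

lemma qdist_commute: "d p q = d q p"
  by (cases p; cases q) (simp add: qdist_eq abs_minus_commute)

lemma hnorm_expA_split_le:
  assumes K: "\<And>\<tau> v. hnorm (expA \<tau> *v v) \<le> K * (\<bar>\<tau>\<bar> powr (1 / al) + hnorm v)"
  shows "hnorm (expA (a + b) *v x - y)
    \<le> K * (\<bar>a\<bar> powr (1 / al) + hnorm (expA b *v x - \<xi>)) + hnorm (expA a *v \<xi> - y)"
proof -
  have split: "expA (a + b) *v x - y = expA a *v (expA b *v x - \<xi>) + (expA a *v \<xi> - y)"
    by (simp add: matrix_vector_mult_diff_distrib expA_add_mult)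
  have "hnorm (expA (a + b) *v x - y) \<le> hnorm (expA a *v (expA b *v x - \<xi>)) + hnorm (expA a *v \<xi> - y)"
    unfolding split by (rule hnorm_add_le)
  then show ?thesis using K[of a "expA b *v x - \<xi>"] by linarith
qed

lemma qdist_quasi_triangle: "\<exists>C>0. \<forall>p z q. d p q \<le> C * (d p z + d z q)"
proof -
  obtain K where K0: "K \<ge> 0"
    and K: "\<And>\<tau> v. hnorm (expA \<tau> *v v) \<le> K * (\<bar>\<tau>\<bar> powr (1 / al) + hnorm v)"
    using hnorm_expA_le by blast
  define C where "C = 2 powr (1 / al) + K + 1"
  have "d p q \<le> C * (d p z + d z q)" for p z q
  proof -
    obtain t x s y \<sigma> \<xi> where pzq: "p = (t, x)" "q = (s, y)" "z = (\<sigma>, \<xi>)"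
      by (cases p; cases q; cases z) auto
    define P1 P2 where "P1 = \<bar>t - \<sigma>\<bar> powr (1 / al)" and "P2 = \<bar>\<sigma> - s\<bar> powr (1 / al)"
    define u1 w1 where "u1 = hnorm (expA (\<sigma> - t) *v x - \<xi>)" and "w1 = hnorm (expA (t - \<sigma>) *v \<xi> - x)"
    define u2 w2 where "u2 = hnorm (expA (s - \<sigma>) *v \<xi> - y)" and "w2 = hnorm (expA (\<sigma> - s) *v y - \<xi>)"
    have nonneg: "0 \<le> P1" "0 \<le> P2" "0 \<le> u1" "0 \<le> u2" "0 \<le> w1" "0 \<le> w2"
      unfolding P1_def P2_def u1_def u2_def w1_def w2_def by (simp_all add: hnorm_nonneg)
    have "\<bar>t - s\<bar> powr (1 / al) \<le> 2 powr (1 / al) * (P1 + P2)"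
      using abs_add_powr_le[of "1 / al" "t - \<sigma>" "\<sigma> - s"] al_pos unfolding P1_def P2_def by simp
    moreover have "hnorm (expA (s - t) *v x - y) \<le> K * (P2 + u1) + u2"
      using hnorm_expA_split_le[OF K, of "s - \<sigma>" "\<sigma> - t" x y \<xi>]
      unfolding P2_def u1_def u2_def by (simp add: abs_minus_commute)
    moreover have "hnorm (expA (t - s) *v y - x) \<le> K * (P1 + w2) + w1"
      using hnorm_expA_split_le[OF K, of "t - \<sigma>" "\<sigma> - s" y x \<xi>]
      unfolding P1_def w1_def w2_def by simp
    ultimately have "d p q \<le> 2 powr (1 / al) * (P1 + P2) + (K * (P1 + P2 + u1 + w2) + u2 + w1) / 2"
      unfolding pzq qdist_eq by (simp add: field_simps)
    also have "\<dots> \<le> C * (P1 + P2 + (u1 + w1 + u2 + w2) / 2)"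
      using nonneg K0 unfolding C_def
      by (simp add: field_simps add_mono mult_left_mono add_nonneg_nonneg mult_nonneg_nonneg)
    also have "\<dots> = C * (d p z + d z q)"
      unfolding pzq qdist_eq P1_def P2_def u1_def u2_def w1_def w2_def by (simp add: field_simps)
    finally show ?thesis .
  qed
  moreover have "C > 0" unfolding C_def using K0 by (simp add: add_pos_nonneg)
  ultimately show ?thesis by blast
qed

lemma continuous_on_hnorm: "continuous_on S hnorm"
proof -
  have "continuous_on S (\<lambda>v. norm (bp i v) powr hom_exp i)" if "i \<in> {1..n}" for i
  proof (rule continuous_on_powr')
    show "continuous_on S (\<lambda>v. norm (bp i v))"
      by (intro continuous_on_norm linear_continuous_on linear_conv_bounded_linear[THEN iffD1]
          blockpart_linear)
  qed (use that hom_exp_pos in auto)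
  then show ?thesis unfolding hnorm_def[abs_def] by (intro continuous_on_sum) auto
qed

lemma continuous_on_expA_mult:
  assumes "continuous_on S f" "continuous_on S g"
  shows "continuous_on S (\<lambda>q. expA (f q) *v g q)"
  unfolding expA_mult_vector
  by (intro continuous_intros continuous_on_compose2[OF _ assms(2)] assms
      linear_continuous_on matrix_vector_mul_bounded_linear) auto

lemma continuous_on_qdist: "continuous_on S (\<lambda>q. d q p)"
proof -
  obtain s y where p: "p = (s, y)" by (cases p) auto
  have eq: "(\<lambda>q. d q p) = (\<lambda>q. \<bar>fst q - s\<bar> powr (1 / al) +
      (hnorm (expA (s - fst q) *v snd q - y) + hnorm (expA (fst q - s) *v y - snd q)) / 2)"
    by (auto simp: p qdist_eq)
  have time: "continuous_on S (\<lambda>q::real \<times> (real^'N). \<bar>fst q - s\<bar> powr (1 / al))"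
    by (rule continuous_on_powr') (use al_pos in \<open>auto intro!: continuous_intros\<close>)
  have space1: "continuous_on S (\<lambda>q::real \<times> (real^'N). hnorm (expA (s - fst q) *v snd q - y))"
    by (rule continuous_on_compose2[OF continuous_on_hnorm[of UNIV]])
      (auto intro!: continuous_intros continuous_on_expA_mult)
  have space2: "continuous_on S (\<lambda>q::real \<times> (real^'N). hnorm (expA (fst q - s) *v y - snd q))"
    by (rule continuous_on_compose2[OF continuous_on_hnorm[of UNIV]])
      (auto intro!: continuous_intros continuous_on_expA_mult)
  show ?thesis
    unfolding eq by (intro continuous_on_add continuous_on_divide continuous_on_const time space1 space2) auto
qed

lemma qdist_less_if_dist_less: "r > 0 \<Longrightarrow> \<exists>\<delta>>0. \<forall>q. dist q p < \<delta> \<longrightarrow> d q p < r"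
  using continuous_on_qdist[of UNIV p] qdist_nonneg
  unfolding continuous_on_iff by (metis UNIV_I qdist_self dist_real_def diff_zero abs_of_nonneg)

text \<open>Closeness in x is read off from the second term of the distance, where
  hnorm dominates the norm once it is at most 1.\<close>
lemma dist_less_if_qdist_less:
  assumes "\<epsilon> > 0"
  shows "\<exists>r>0. \<forall>q. d q p < r \<longrightarrow> dist q p < \<epsilon>"
proof -
  obtain s y where p: "p = (s, y)" by (cases p) auto
  define e where "e = \<epsilon> / 3"
  have e: "e > 0" unfolding e_def using assms by simp
  have "continuous_on UNIV (\<lambda>\<tau>::real. expA \<tau> *v y)"
    by (intro continuous_on_expA_mult continuous_intros)
  then obtain \<eta> where \<eta>: "\<eta> > 0" "\<And>\<tau>. dist \<tau> 0 < \<eta> \<Longrightarrow> dist (expA \<tau> *v y) (expA 0 *v y) < e"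
    unfolding continuous_on_iff using e by (meson UNIV_I)
  define m where "m = min \<eta> e"
  define r where "r = min (1 / 4) (min (m powr (1 / al)) (e / 2))"
  have m: "m > 0" unfolding m_def using \<eta> e by simp
  have r: "r > 0" unfolding r_def using m e by simp
  have "r powr al \<le> (m powr (1 / al)) powr al"
    unfolding r_def using al_pos r by (intro powr_mono2) (auto simp: r_def)
  then have r_m: "r powr al \<le> m" using m al_pos by (simp add: powr_powr)
  have "dist q p < \<epsilon>" if "d q p < r" for q
  proof -
    obtain t x where q: "q = (t, x)" by (cases q) auto
    have "\<bar>t - s\<bar> powr (1 / al) + hnorm (expA (s - t) *v x - y) / 2 + hnorm (expA (t - s) *v y - x) / 2 < r"
      using that unfolding p q qdist_eq by (simp add: add_divide_distrib add.assoc)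
    then have t: "\<bar>t - s\<bar> powr (1 / al) < r" and x: "hnorm (expA (t - s) *v y - x) < 2 * r"
      using hnorm_nonneg[of "expA (s - t) *v x - y"] hnorm_nonneg[of "expA (t - s) *v y - x"]
        powr_ge_zero[of "\<bar>t - s\<bar>" "1 / al"] by linarith+
    have "\<bar>t - s\<bar> < m" using abs_less_powr_if_powr_inverse_less[OF al_pos t] r_m by linarith
    then have ts: "\<bar>t - s\<bar> < e" and "norm (expA (t - s) *v y - y) < e"
      using \<eta>(2)[of "t - s"] unfolding m_def by (simp_all add: expA_0_mult dist_norm)
    moreover have "norm (x - expA (t - s) *v y) < e"
    proof -
      have "2 * r \<le> 1" "2 * r \<le> e" unfolding r_def by auto
      then show ?thesis
        using norm_le_hnorm[of "expA (t - s) *v y - x"] x by (simp add: norm_minus_commute)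
    qed
    moreover have "dist q p \<le> \<bar>t - s\<bar> + norm (x - expA (t - s) *v y) + norm (expA (t - s) *v y - y)"
      using norm_Pair_le[of "t - s" "x - y"] norm_triangle_ineq[of "x - expA (t - s) *v y" "expA (t - s) *v y - y"]
      unfolding p q by (simp add: dist_norm)
    ultimately show ?thesis unfolding e_def by linarith
  qed
  then show ?thesis using r by blast
qed

lemma d_open_iff_openin: "d_open X d U \<longleftrightarrow> openin (top_of_set X) U"
proof
  assume U: "d_open X d U"
  show "openin (top_of_set X) U"
    unfolding openin_euclidean_subtopology_iff
  proof (intro conjI ballI)
    show "U \<subseteq> X" using U by (simp add: d_open_def)
    fix x assume "x \<in> U"
    then obtain r where "r > 0" "dball X d x r \<subseteq> U" using U by (auto simp: d_open_def)
    moreover obtain \<delta> where "\<delta> > 0" "\<And>q. dist q x < \<delta> \<Longrightarrow> d q x < r"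
      using qdist_less_if_dist_less[OF \<open>r > 0\<close>] by blast
    ultimately have "\<forall>x'\<in>X. dist x' x < \<delta> \<longrightarrow> x' \<in> U" by (auto simp: dball_def)
    then show "\<exists>e>0. \<forall>x'\<in>X. dist x' x < e \<longrightarrow> x' \<in> U" using \<open>\<delta> > 0\<close> by blast
  qed
next
  assume U: "openin (top_of_set X) U"
  show "d_open X d U" unfolding d_open_def
  proof (intro conjI ballI)
    show "U \<subseteq> X" using U by (simp add: openin_euclidean_subtopology_iff)
    fix x assume "x \<in> U"
    then obtain e where "e > 0" "\<forall>x'\<in>X. dist x' x < e \<longrightarrow> x' \<in> U"
      using U by (auto simp: openin_euclidean_subtopology_iff)
    moreover obtain r where "r > 0" "\<And>q. d q x < r \<Longrightarrow> dist q x < e"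
      using dist_less_if_qdist_less[OF \<open>e > 0\<close>] by blast
    ultimately show "\<exists>r>0. dball X d x r \<subseteq> U" by (auto simp: dball_def)
  qed
qed

lemma d_open_dball: "d_open X d (dball X d x r)"
proof -
  have "openin (top_of_set X) (X \<inter> (\<lambda>q. d q x) -` {..<r})"
    by (intro continuous_openin_preimage_gen continuous_on_qdist) auto
  moreover have "dball X d x r = X \<inter> (\<lambda>q. d q x) -` {..<r}" by (auto simp: dball_def)
  ultimately show ?thesis by (simp add: d_open_iff_openin)
qed

definition hnorm_ball :: "real \<Rightarrow> (real^'N) set" where
  "hnorm_ball \<rho> = {v. hnorm v < \<rho>}"

lemma open_hnorm_ball: "open (hnorm_ball \<rho>)"
  unfolding hnorm_ball_def by (intro open_Collect_less continuous_on_hnorm continuous_on_const)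

lemma bounded_hnorm_ball: "bounded (hnorm_ball \<rho>)"
proof -
  have "norm v \<le> (\<Sum>i=1..n. \<bar>\<rho>\<bar> powr (1 / hom_exp i))" if "v \<in> hnorm_ball \<rho>" for v
  proof -
    have "norm (bp i v) \<le> \<bar>\<rho>\<bar> powr (1 / hom_exp i)" if i: "i \<in> {1..n}" for i
    proof -
      have e: "0 < hom_exp i" using i hom_exp_pos by auto
      have "norm (bp i v) powr hom_exp i \<le> \<bar>\<rho>\<bar>"
        using blockpart_powr_le_hnorm[OF i, of v] \<open>v \<in> hnorm_ball \<rho>\<close> unfolding hnorm_ball_def by auto
      then have "(norm (bp i v) powr hom_exp i) powr (1 / hom_exp i) \<le> \<bar>\<rho>\<bar> powr (1 / hom_exp i)"
        using e by (intro powr_mono2) auto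
      moreover have "(norm (bp i v) powr hom_exp i) powr (1 / hom_exp i) = norm (bp i v)"
        using e by (cases "bp i v = 0") (simp_all add: powr_powr)
      ultimately show ?thesis by simp
    qed
    then have "(\<Sum>i=1..n. norm (bp i v)) \<le> (\<Sum>i=1..n. \<bar>\<rho>\<bar> powr (1 / hom_exp i))"
      by (intro sum_mono) auto
    then show ?thesis using norm_le_sum_blockpart[of v] by linarith
  qed
  then show ?thesis unfolding bounded_iff by blast
qed

lemma hnorm_ball_lmeasurable: "hnorm_ball \<rho> \<in> lmeasurable"
  by (intro lmeasurable_open bounded_hnorm_ball open_hnorm_ball)

definition hnorm_vol :: "real \<Rightarrow> real" where
  "hnorm_vol \<rho> = measure lborel (hnorm_ball \<rho>)"

lemma emeasure_hnorm_ball: "emeasure lborel (hnorm_ball \<rho>) = ennreal (hnorm_vol \<rho>)"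
  unfolding hnorm_vol_def using emeasure_bounded_finite[OF bounded_hnorm_ball[of \<rho>]]
  by (intro emeasure_eq_ennreal_measure) auto

lemma hnorm_vol_lebesgue: "measure lebesgue (hnorm_ball \<rho>) = hnorm_vol \<rho>"
  unfolding hnorm_vol_def using open_hnorm_ball by simp

lemma hnorm_vol_nonneg: "0 \<le> hnorm_vol \<rho>"
  unfolding hnorm_vol_def by simp

lemma hnorm_vol_pos:
  assumes "\<rho> > 0"
  shows "0 < hnorm_vol \<rho>"
proof -
  obtain \<delta> where "\<delta> > 0" and \<delta>: "\<And>v. dist v 0 < \<delta> \<Longrightarrow> dist (hnorm v) (hnorm 0) < \<rho>"
    using continuous_on_hnorm[of UNIV] assms unfolding continuous_on_iff by (meson UNIV_I)
  have "ball 0 \<delta> \<subseteq> hnorm_ball \<rho>"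
    using \<delta> hnorm_nonneg by (auto simp: hnorm_ball_def hnorm_0 dist_real_def dist_commute)
  then have "measure lborel (ball (0::real^'N) \<delta>) \<le> hnorm_vol \<rho>"
    unfolding hnorm_vol_def
    by (intro measure_mono_fmeasurable)
      (auto intro!: fmeasurableI emeasure_bounded_finite bounded_hnorm_ball simp: open_hnorm_ball)
  moreover have "0 < measure lborel (ball (0::real^'N) \<delta>)" using \<open>\<delta> > 0\<close> by simp
  ultimately show ?thesis by linarith
qed

definition dilation :: "real \<Rightarrow> real^'N \<Rightarrow> real^'N" where
  "dilation l v = (\<chi> k. l powr (1 + al * (real (blk k) - 1)) * v $ k)"

definition dilation_det :: "real \<Rightarrow> real" where
  "dilation_det l = (\<Prod>k\<in>UNIV. l powr (1 + al * (real (blk k) - 1)))"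

lemma hnorm_dilation:
  assumes l: "l > 0"
  shows "hnorm (dilation l v) = l * hnorm v"
proof -
  have "norm (bp i (dilation l v)) powr hom_exp i = l * norm (bp i v) powr hom_exp i"
    if "i \<in> {1..n}" for i
  proof -
    have "bp i (dilation l v) = l powr (1 + al * (real i - 1)) *\<^sub>R bp i v"
      by (simp add: vec_eq_iff blockpart_def dilation_def)
    then have "norm (bp i (dilation l v)) powr hom_exp i
        = (l powr (1 + al * (real i - 1))) powr hom_exp i * norm (bp i v) powr hom_exp i"
      using l by (simp add: powr_mult)
    moreover have "1 + al * (real i - 1) > 0" using al_pos that by (simp add: add_pos_nonneg)
    ultimately show ?thesis using l by (simp add: powr_powr hom_exp_def)
  qed
  then show ?thesis unfolding hnorm_def by (simp add: sum_distrib_left)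
qed

lemma dilation_inverse: "l > 0 \<Longrightarrow> dilation l (dilation (1 / l) v) = v"
  by (simp add: dilation_def vec_eq_iff mult.assoc[symmetric] powr_mult[symmetric] powr_divide)

lemma dilation_det_pos: "l > 0 \<Longrightarrow> dilation_det l > 0"
  unfolding dilation_det_def by (intro prod_pos) auto

lemma hnorm_vol_scale_le:
  assumes l: "l > 0"
  shows "hnorm_vol (l * \<rho>) \<le> dilation_det l * hnorm_vol \<rho>"
proof -
  have "hnorm_ball (l * \<rho>) \<subseteq> dilation l ` hnorm_ball \<rho>"
  proof
    fix v assume "v \<in> hnorm_ball (l * \<rho>)"
    then have "hnorm (dilation (1 / l) v) < \<rho>" using l by (simp add: hnorm_ball_def hnorm_dilation field_simps)
    then show "v \<in> dilation l ` hnorm_ball \<rho>"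
      using dilation_inverse[OF l, of v] unfolding hnorm_ball_def by (metis image_eqI mem_Collect_eq)
  qed
  moreover have "dilation l ` hnorm_ball \<rho> \<in> lmeasurable"
    unfolding dilation_def[abs_def] by (rule measurable_stretch[OF hnorm_ball_lmeasurable])
  ultimately have "hnorm_vol (l * \<rho>) \<le> measure lebesgue (dilation l ` hnorm_ball \<rho>)"
    unfolding hnorm_vol_lebesgue[symmetric]
    using hnorm_ball_lmeasurable by (intro measure_mono_fmeasurable) (auto simp: fmeasurable_def)
  also have "\<dots> = dilation_det l * hnorm_vol \<rho>"
    unfolding dilation_def[abs_def] measure_stretch[OF hnorm_ball_lmeasurable]
    using dilation_det_pos[OF l] by (simp add: dilation_det_def hnorm_vol_lebesgue)
  finally show ?thesis .
qed

text \<open>The slice of a d-ball at time t, translated by exp((t - s) A) y.\<close>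
definition slice_set :: "real \<Rightarrow> real \<Rightarrow> (real^'N) set" where
  "slice_set \<tau> \<rho> = {w. \<bar>\<tau>\<bar> powr (1 / al) + (hnorm (expA (-\<tau>) *v w) + hnorm w) / 2 < \<rho>}"

lemma open_slice_set: "open (slice_set \<tau> \<rho>)"
proof -
  have "continuous_on UNIV (\<lambda>w. hnorm (expA (-\<tau>) *v w))"
    by (rule continuous_on_compose2[OF continuous_on_hnorm[of UNIV]])
      (auto intro: linear_continuous_on matrix_vector_mul_bounded_linear)
  then show ?thesis
    unfolding slice_set_def by (intro open_Collect_less continuous_on_hnorm continuous_intros) auto
qed

lemma qdist_section_eq:
  "{x. d (t, x) (s, y) < r} = (+) (- (expA (t - s) *v y)) -` slice_set (t - s) r"
proof -
  have "expA (s - t) *v x - y = expA (- (t - s)) *v (x - expA (t - s) *v y)" for x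
    by (simp add: matrix_vector_mult_diff_distrib expA_add_mult expA_0_mult)
  then show ?thesis
    unfolding slice_set_def by (auto simp: qdist_eq abs_minus_commute hnorm_minus_commute)
qed

lemma emeasure_qdist_section:
  "emeasure lborel {x. d (t, x) (s, y) < r} = emeasure lborel (slice_set (t - s) r)"
proof -
  let ?a = "- (expA (t - s) *v y)"
  have "emeasure lborel (slice_set (t - s) r) = emeasure (distr lborel borel ((+) ?a)) (slice_set (t - s) r)"
    by (simp add: lborel_distr_plus)
  also have "\<dots> = emeasure lborel ((+) ?a -` slice_set (t - s) r \<inter> space lborel)"
    by (rule emeasure_distr) (auto simp: open_slice_set)
  finally show ?thesis by (simp add: qdist_section_eq)
qed

lemma slice_set_subset: "slice_set \<tau> \<rho> \<subseteq> (if \<bar>\<tau>\<bar> powr (1 / al) < \<rho> then hnorm_ball (2 * \<rho>) else {})"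
proof
  fix w assume "w \<in> slice_set \<tau> \<rho>"
  then have "\<bar>\<tau>\<bar> powr (1 / al) + hnorm (expA (-\<tau>) *v w) / 2 + hnorm w / 2 < \<rho>"
    unfolding slice_set_def by (simp add: add_divide_distrib add.assoc)
  then have "\<bar>\<tau>\<bar> powr (1 / al) < \<rho>" "hnorm w < 2 * \<rho>"
    using hnorm_nonneg[of "expA (-\<tau>) *v w"] hnorm_nonneg[of w] powr_ge_zero[of "\<bar>\<tau>\<bar>" "1 / al"]
    by linarith+
  then show "w \<in> (if \<bar>\<tau>\<bar> powr (1 / al) < \<rho> then hnorm_ball (2 * \<rho>) else {})"
    unfolding hnorm_ball_def by simp
qed

lemma hnorm_ball_subset_slice_set:
  "\<exists>c>0. c \<le> 1 \<and> (\<forall>\<tau> \<rho>. \<rho> > 0 \<longrightarrow> \<bar>\<tau>\<bar> powr (1 / al) \<le> c * \<rho> \<longrightarrow> hnorm_ball (c * \<rho>) \<subseteq> slice_set \<tau> \<rho>)"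
proof -
  obtain K where K0: "K \<ge> 0"
    and K: "\<And>\<tau> v. hnorm (expA \<tau> *v v) \<le> K * (\<bar>\<tau>\<bar> powr (1 / al) + hnorm v)"
    using hnorm_expA_le by blast
  define c where "c = 1 / (2 * K + 4)"
  have c: "c > 0" "c \<le> 1" unfolding c_def using K0 by auto
  have "hnorm_ball (c * \<rho>) \<subseteq> slice_set \<tau> \<rho>" if \<rho>: "\<rho> > 0" and \<tau>: "\<bar>\<tau>\<bar> powr (1 / al) \<le> c * \<rho>" for \<tau> \<rho>
  proof
    fix w assume "w \<in> hnorm_ball (c * \<rho>)"
    then have w: "hnorm w < c * \<rho>" by (simp add: hnorm_ball_def)
    have "hnorm (expA (-\<tau>) *v w) \<le> K * (\<bar>\<tau>\<bar> powr (1 / al) + hnorm w)"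
      using K[of "-\<tau>" w] by simp
    also have "\<dots> \<le> K * (2 * c * \<rho>)"
      using \<tau> w K0 by (intro mult_left_mono) auto
    finally have "hnorm (expA (-\<tau>) *v w) \<le> 2 * (K * (c * \<rho>))" by (simp add: ac_simps)
    moreover have "3 * (c * \<rho>) + 2 * (K * (c * \<rho>)) < 2 * \<rho>"
    proof -
      have "c * (3 + 2 * K) < 2" unfolding c_def using K0 by (simp add: field_simps)
      then have "\<rho> * (c * (3 + 2 * K)) < \<rho> * 2" using \<rho> by (rule mult_strict_left_mono)
      then show ?thesis by (simp add: algebra_simps)
    qed
    ultimately have "2 * \<bar>\<tau>\<bar> powr (1 / al) + hnorm (expA (-\<tau>) *v w) + hnorm w < 2 * \<rho>"
      using \<tau> w by linarith
    then show "w \<in> slice_set \<tau> \<rho>" unfolding slice_set_def by (simp add: field_simps)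
  qed
  then show ?thesis using c by blast
qed

lemma strip_borel: "(strip T :: (real \<times> (real^'N)) set) \<in> sets borel"
  unfolding strip_def by (intro borel_closed closed_Times) auto

lemma dball_borel: "dball (strip T) d p r \<in> sets borel"
proof -
  have "open {q. d q p < r}" by (intro open_Collect_less continuous_on_qdist continuous_on_const)
  moreover have "dball (strip T) d p r = strip T \<inter> {q. d q p < r}" by (auto simp: dball_def)
  ultimately show ?thesis using strip_borel by (metis borel_open sets.Int)
qed

lemma emeasure_dball_eq_nn_integral: "emeasure lborel (dball (strip T) d p r) =
   (\<integral>\<^sup>+t. emeasure lborel (Pair t -` dball (strip T) d p r) \<partial>lborel)"
proof -
  have "emeasure lborel (dball (strip T) d p r) = emeasure (lborel \<Otimes>\<^sub>M lborel) (dball (strip T) d p r)"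
    by (simp add: lborel_prod)
  also have "\<dots> = (\<integral>\<^sup>+t. emeasure lborel (Pair t -` dball (strip T) d p r) \<partial>lborel)"
    by (rule lborel.emeasure_pair_measure_alt) (subst lborel_prod, simp add: dball_borel)
  finally show ?thesis .
qed

lemma emeasure_dball_section: "emeasure lborel (Pair t -` dball (strip T) d (s, y) r) =
   indicator {-T..T} t * emeasure lborel (slice_set (t - s) r)"
proof (cases "t \<in> {-T..T}")
  case True
  then have "Pair t -` dball (strip T) d (s, y) r = {x. d (t, x) (s, y) < r}"
    by (auto simp: dball_def strip_def)
  then show ?thesis using True by (simp add: emeasure_qdist_section)
next
  case False
  then have "Pair t -` dball (strip T) d (s, y) r = {}"
    by (auto simp: dball_def strip_def)
  then show ?thesis using False by simp
qed

lemma emeasure_dball_le: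
  assumes s: "s \<in> {-T..T}" and r: "r > 0"
  shows "emeasure lborel (dball (strip T) d (s, y) r)
    \<le> ennreal (hnorm_vol (2 * r) * clipped_length T s (r powr al))"
proof -
  define J where "J = {-T..T} \<inter> {s - r powr al..s + r powr al}"
  have "emeasure lborel (Pair t -` dball (strip T) d (s, y) r) \<le> ennreal (hnorm_vol (2 * r)) * indicator J t" for t
  proof (cases "t \<in> {-T..T}")
    case True
    have "emeasure lborel (slice_set (t - s) r)
        \<le> emeasure lborel (if \<bar>t - s\<bar> powr (1 / al) < r then hnorm_ball (2 * r) else {})"
      by (rule emeasure_mono[OF slice_set_subset]) (auto simp: open_hnorm_ball)
    also have "\<dots> \<le> ennreal (hnorm_vol (2 * r)) * indicator J t"
    proof (cases "\<bar>t - s\<bar> powr (1 / al) < r")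
      case True
      then have "t \<in> J"
        using abs_less_powr_if_powr_inverse_less[OF al_pos True] \<open>t \<in> {-T..T}\<close> unfolding J_def by auto
      then show ?thesis using True by (simp add: emeasure_hnorm_ball)
    qed simp
    finally show ?thesis using True by (simp add: emeasure_dball_section)
  qed (simp add: emeasure_dball_section)
  then have "emeasure lborel (dball (strip T) d (s, y) r) \<le> (\<integral>\<^sup>+t. ennreal (hnorm_vol (2 * r)) * indicator J t \<partial>lborel)"
    unfolding emeasure_dball_eq_nn_integral by (intro nn_integral_mono) auto
  also have "\<dots> = ennreal (hnorm_vol (2 * r) * clipped_length T s (r powr al))"
    using emeasure_clipped_interval[OF s, of "r powr al"] clipped_length_nonneg[OF s, of "r powr al"]
    unfolding J_def by (simp add: nn_integral_cmult_indicator ennreal_mult hnorm_vol_nonneg)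
  finally show ?thesis .
qed

lemma emeasure_dball_ge:
  assumes s: "s \<in> {-T..T}" and r: "r > 0" and "c > 0"
    and c: "\<And>\<tau>. \<bar>\<tau>\<bar> powr (1 / al) \<le> c * r \<Longrightarrow> hnorm_ball (c * r) \<subseteq> slice_set \<tau> r"
  shows "ennreal (hnorm_vol (c * r) * clipped_length T s ((c * r) powr al))
    \<le> emeasure lborel (dball (strip T) d (s, y) r)"
proof -
  define J where "J = {-T..T} \<inter> {s - (c * r) powr al..s + (c * r) powr al}"
  have "ennreal (hnorm_vol (c * r)) * indicator J t \<le> emeasure lborel (Pair t -` dball (strip T) d (s, y) r)" for t
  proof (cases "t \<in> J")
    case True
    then have t: "t \<in> {-T..T}" "\<bar>t - s\<bar> \<le> (c * r) powr al" unfolding J_def by auto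
    have "\<bar>t - s\<bar> powr (1 / al) \<le> c * r"
      using t(2) \<open>c > 0\<close> r by (intro powr_inverse_le_if_abs_le_powr al_pos) auto
    then have "emeasure lborel (hnorm_ball (c * r)) \<le> emeasure lborel (slice_set (t - s) r)"
      by (intro emeasure_mono c) (auto simp: open_slice_set)
    then show ?thesis using True t by (simp add: emeasure_dball_section emeasure_hnorm_ball)
  qed simp
  then have "(\<integral>\<^sup>+t. ennreal (hnorm_vol (c * r)) * indicator J t \<partial>lborel) \<le> emeasure lborel (dball (strip T) d (s, y) r)"
    unfolding emeasure_dball_eq_nn_integral by (intro nn_integral_mono) auto
  moreover have "(\<integral>\<^sup>+t. ennreal (hnorm_vol (c * r)) * indicator J t \<partial>lborel)
      = ennreal (hnorm_vol (c * r) * clipped_length T s ((c * r) powr al))"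
    using emeasure_clipped_interval[OF s, of "(c * r) powr al"] clipped_length_nonneg[OF s, of "(c * r) powr al"]
    unfolding J_def by (simp add: nn_integral_cmult_indicator ennreal_mult hnorm_vol_nonneg)
  ultimately show ?thesis by simp
qed

lemma emeasure_dball_pos:
  assumes "T > 0" "s \<in> {-T..T}" "r > 0"
  shows "0 < emeasure lborel (dball (strip T) d (s, y) r)"
proof -
  obtain c where c: "c > 0" "\<And>\<tau> \<rho>. \<rho> > 0 \<Longrightarrow> \<bar>\<tau>\<bar> powr (1 / al) \<le> c * \<rho> \<Longrightarrow> hnorm_ball (c * \<rho>) \<subseteq> slice_set \<tau> \<rho>"
    using hnorm_ball_subset_slice_set by blast
  have "0 < hnorm_vol (c * r) * clipped_length T s ((c * r) powr al)"
    using c assms by (intro mult_pos_pos hnorm_vol_pos clipped_length_pos) auto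
  then have "0 < ennreal (hnorm_vol (c * r) * clipped_length T s ((c * r) powr al))" by simp
  also have "\<dots> \<le> emeasure lborel (dball (strip T) d (s, y) r)"
    using assms c by (intro emeasure_dball_ge) auto
  finally show ?thesis .
qed

lemma emeasure_dball_finite:
  assumes "s \<in> {-T..T}" "r > 0"
  shows "emeasure lborel (dball (strip T) d (s, y) r) < \<infinity>"
  using emeasure_dball_le[OF assms, of y] by (simp add: order_le_less_trans)

lemma emeasure_dball_doubling:
  assumes s: "s \<in> {-T..T}" and r: "r > 0" and c: "0 < c" "c \<le> 1"
    and c_sub: "\<And>\<tau> \<rho>. \<rho> > 0 \<Longrightarrow> \<bar>\<tau>\<bar> powr (1 / al) \<le> c * \<rho> \<Longrightarrow> hnorm_ball (c * \<rho>) \<subseteq> slice_set \<tau> \<rho>"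
  shows "emeasure lborel (dball (strip T) d (s, y) (2 * r))
    \<le> ennreal (dilation_det (4 / c) * (2 / c) powr al) * emeasure lborel (dball (strip T) d (s, y) r)"
proof -
  define k where "k = (2 / c) powr al"
  define R where "R = (c * r) powr al"
  have k: "1 \<le> k" unfolding k_def using c al_pos by (intro ge_one_powr_ge_zero) (auto simp: field_simps)
  have R: "0 \<le> R" unfolding R_def by simp
  have "(2 * r) powr al = k * R"
    using c r powr_mult[of "2 / c" "c * r" al] unfolding k_def R_def by simp
  then have L: "clipped_length T s ((2 * r) powr al) \<le> k * clipped_length T s R"
    using s R k by (simp add: clipped_length_scale)
  have W: "hnorm_vol (2 * (2 * r)) \<le> dilation_det (4 / c) * hnorm_vol (c * r)"
    using hnorm_vol_scale_le[of "4 / c" "c * r"] c by simp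
  have "emeasure lborel (dball (strip T) d (s, y) (2 * r))
      \<le> ennreal (hnorm_vol (2 * (2 * r)) * clipped_length T s ((2 * r) powr al))"
    using s r by (intro emeasure_dball_le) auto
  also have "\<dots> \<le> ennreal ((dilation_det (4 / c) * k) * (hnorm_vol (c * r) * clipped_length T s R))"
  proof (rule ennreal_leI)
    have "hnorm_vol (2 * (2 * r)) * clipped_length T s ((2 * r) powr al)
        \<le> (dilation_det (4 / c) * hnorm_vol (c * r)) * (k * clipped_length T s R)"
      using W L dilation_det_pos[of "4 / c"] c s R
      by (intro mult_mono) (auto simp: hnorm_vol_nonneg clipped_length_nonneg)
    then show "hnorm_vol (2 * (2 * r)) * clipped_length T s ((2 * r) powr al)
        \<le> (dilation_det (4 / c) * k) * (hnorm_vol (c * r) * clipped_length T s R)"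
      by (simp add: ac_simps)
  qed
  also have "\<dots> = ennreal (dilation_det (4 / c) * k) * ennreal (hnorm_vol (c * r) * clipped_length T s R)"
    using dilation_det_pos[of "4 / c"] c k s R
    by (intro ennreal_mult) (auto intro!: mult_nonneg_nonneg hnorm_vol_nonneg clipped_length_nonneg)
  also have "\<dots> \<le> ennreal (dilation_det (4 / c) * k) * emeasure lborel (dball (strip T) d (s, y) r)"
    unfolding R_def using s r c c_sub by (intro mult_left_mono emeasure_dball_ge) auto
  finally show ?thesis unfolding k_def .
qed

lemma sets_restrict_strip:
  "sets (restrict_space lborel (strip T)) = sigma_sets (strip T) {U. d_open (strip T) d U}"
proof -
  let ?X = "strip T :: (real \<times> (real^'N)) set"
  have "sets (restrict_space lborel ?X) = (\<inter>) ?X ` sigma_sets UNIV {S. open S}"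
    by (simp add: sets_restrict_space sets_borel)
  also have "\<dots> = sigma_sets ?X ((\<inter>) ?X ` {S. open S})"
    by (rule sigma_sets_Int) (use strip_borel[of T] in \<open>auto simp: sets_borel\<close>)
  also have "(\<inter>) ?X ` {S. open S} = {U. d_open ?X d U}"
    by (auto simp: d_open_iff_openin openin_open)
  finally show ?thesis .
qed

lemma doubling_strip:
  assumes T: "T > 0"
  shows "\<exists>A'>0. \<forall>x\<in>strip T. \<forall>r>0.
      0 < emeasure lborel (dball (strip T) d x (2 * r))
    \<and> emeasure lborel (dball (strip T) d x (2 * r)) \<le> ennreal A' * emeasure lborel (dball (strip T) d x r)
    \<and> emeasure lborel (dball (strip T) d x r) < \<infinity>"
proof -
  obtain c where c: "0 < c" "c \<le> 1"
    "\<And>\<tau> \<rho>. \<rho> > 0 \<Longrightarrow> \<bar>\<tau>\<bar> powr (1 / al) \<le> c * \<rho> \<Longrightarrow> hnorm_ball (c * \<rho>) \<subseteq> slice_set \<tau> \<rho>"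
    using hnorm_ball_subset_slice_set by blast
  have "dilation_det (4 / c) * (2 / c) powr al > 0"
    using c dilation_det_pos[of "4 / c"] by simp
  moreover have "0 < emeasure lborel (dball (strip T) d x (2 * r))
    \<and> emeasure lborel (dball (strip T) d x (2 * r))
        \<le> ennreal (dilation_det (4 / c) * (2 / c) powr al) * emeasure lborel (dball (strip T) d x r)
    \<and> emeasure lborel (dball (strip T) d x r) < \<infinity>" if "x \<in> strip T" "r > 0" for x r
  proof -
    obtain s y where x: "x = (s, y)" "s \<in> {-T..T}" using \<open>x \<in> strip T\<close> by (auto simp: strip_def)
    show ?thesis unfolding x(1)
      using emeasure_dball_pos[OF T x(2)] emeasure_dball_finite[OF x(2)]
        emeasure_dball_doubling[OF x(2) _ c] \<open>r > 0\<close> by simp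
  qed
  ultimately show ?thesis by blast
qed

lemma homogeneous_space_strip:
  assumes "T > 0"
  shows "homogeneous_space (strip T) d (restrict_space lborel (strip T))"
proof -
  obtain C where "C > 0" "\<And>p z q. d p q \<le> C * (d p z + d z q)"
    using qdist_quasi_triangle by blast
  then have "quasi_distance (strip T) d"
    unfolding quasi_distance_def using qdist_nonneg qdist_eq_0_iff qdist_commute by blast
  moreover have "emeasure (restrict_space lborel (strip T)) (dball (strip T) d x \<rho>)
      = emeasure lborel (dball (strip T) d x \<rho>)" for x \<rho>
    by (rule emeasure_restrict_space) (auto simp: strip_borel dball_def)
  ultimately show ?thesis
    unfolding homogeneous_space_def
    using d_open_dball sets_restrict_strip doubling_strip[OF assms]
    by (simp add: space_restrict_space)
qed

end

theorem propositionC1: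
  fixes \<alpha> :: real and n :: nat and dd :: "nat \<Rightarrow> nat"
    and blk :: "'N::finite \<Rightarrow> nat" and A :: "real^'N^'N"
  assumes "block_setting n dd blk A"
    and "0 < \<alpha>" and "\<alpha> \<le> 2"
  shows "(\<forall>T>0. \<forall>p\<in>strip T. \<forall>q\<in>strip T. qdist \<alpha> n blk A p q = 0 \<longleftrightarrow> p = q)
       \<and> (\<forall>T>0. \<forall>p\<in>strip T. \<forall>q\<in>strip T. qdist \<alpha> n blk A p q = qdist \<alpha> n blk A q p)
       \<and> (\<exists>C>0. \<forall>T>0. \<forall>p\<in>strip T. \<forall>z\<in>strip T. \<forall>q\<in>strip T.
            qdist \<alpha> n blk A p q \<le> C * (qdist \<alpha> n blk A p z + qdist \<alpha> n blk A z q))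
       \<and> (\<forall>T>0. homogeneous_space (strip T) (qdist \<alpha> n blk A)
                 (restrict_space lborel (strip T)))"
proof -
  interpret block_quasi_distance \<alpha> n dd blk A
    using assms by unfold_locales
  obtain C where "C > 0" "\<And>p z q. qdist \<alpha> n blk A p q \<le> C * (qdist \<alpha> n blk A p z + qdist \<alpha> n blk A z q)"
    using qdist_quasi_triangle by blast
  then show ?thesis using qdist_eq_0_iff qdist_commute homogeneous_space_strip by blast
qed

end
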